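(* Consider a multi-task model with $M$ tasks. Let $\Phi(W;x)\in\mathbb{R}^p$ be a shared representation of input $x$, differentiable in the shared parameters $W\in\mathbb{R}^d$, with Jacobian $\nabla_W\Phi(W;x)\in\mathbb{R}^{p\times d}$; let $\phi=(\phi_1,\dots,\phi_M)$ be task-specific parameters, and for each $m$ let $f_m(\Phi,\phi_m;y)$ be a loss differentiable in $\Phi$. Let $\mathcal{D}$ be a distribution over pairs $(x,y)$ for which $\mathbb{E}_{(x,y)\sim\mathcal{D}}[\nabla_W\Phi(W;x)]$ exists, and let $\mathcal{B}$ be a finite batch of pairs $(x,y)$. Define, for each $m$, \[ g^W_m=\frac{1}{|\mathcal{B}|}\sum_{(x,y)\in\mathcal{B}}\nabla_W\Phi(W;x)^\top\nabla_\Phi f_m(\Phi(W;x),\phi_m;y)\in\mathbb{R}^d, \qquad g^\Phi_m=\frac{1}{|\mathcal{B}|}\sum_{(x,y)\in\mathcal{B}}\nabla_\Phi f_m(\Phi(W;x),\phi_m;y)\in\mathbb{R}^p, \] (the parameter gradient and the representation gradient of the batch loss of task $m$), and let $\nabla_W F\in\mathbb{R}^{d\times M}$ and $\nabla_\Phi F\in\mathbb{R}^{p\times M}$ be the matrices with columns $g^W_m$ and $g^\Phi_m$ respectively. For $\lambda\in\Delta^M$ define the residual \[ R_{\mathcal{B}}=\sum_{m=1}^M\sum_{(x,y)\in\mathcal{B}}\frac{\lambda_m}{|\mathcal{B}|}\Big(\nabla_W\Phi(W;x)-\mathbb{E}_{(x',y')\sim\mathcal{D}}[\nabla_W\Phi(W;x')]\Big)^\top\nabla_\Phi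 f_m(\Phi(W;x),\phi_m;y). \] Suppose there exist $\lambda\in\Delta^M$ and $\ell,\epsilon,\delta>0$ such that \[ \big\|\mathbb{E}_{(x,y)\sim\mathcal{D}}[\nabla_W\Phi(W;x)]\big\|_2\le\ell,\qquad \|\nabla_\Phi F\,\lambda\|\le\epsilon,\qquad \|R_{\mathcal{B}}\|\le\delta . \] Then $\|\nabla_W F\,\lambda\|\le \ell\epsilon+\delta$.
   Context: $\Delta^M=\{\lambda\in\mathbb{R}^M:\lambda_i\ge0,\ \sum_i\lambda_i=1\}$ is the probability simplex. $\|\cdot\|$ is the Euclidean norm of a vector and $\|\cdot\|_2$ the spectral norm of a matrix. $\nabla_\Phi f_m(\Phi,\phi_m;y)$ is the gradient of $f_m$ with respect to its first argument. *)

theory Defs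
  imports "HOL-Analysis.Analysis" "HOL-Probability.Probability"
begin

definition grad :: "(real ^ 'p \<Rightarrow> real) \<Rightarrow> real ^ 'p \<Rightarrow> real ^ 'p" where
  "grad g z = (\<chi> i. frechet_derivative g (at z) (axis i 1))"

definition spec_norm :: "real ^ 'n ^ 'm \<Rightarrow> real" where
  "spec_norm A = onorm (\<lambda>v. A *v v)"

end

theory Submission
  imports Defs
begin

text \<open>Writing \<open>J\<^sub>x\<close> for the Jacobian at sample \<open>x\<close> and \<open>E\<close> for its expectation, linearity
  splits the weighted parameter gradient \<open>\<nabla>\<^sub>WF \<lambda>\<close> exactly into the residual \<open>R\<^sub>B\<close> plus
  \<open>E\<^sup>T (\<nabla>\<^sub>\<Phi>F \<lambda>)\<close>. The triangle inequality and \<open>\<parallel>E\<^sup>T v\<parallel> \<le> \<parallel>E\<parallel>\<^sub>2 \<parallel>v\<parallel>\<close> then give the bound.\<close>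

lemma linear_sum_list:
  assumes "linear h"
  shows "h (sum_list (map f xs)) = sum_list (map (\<lambda>x. h (f x)) xs)"
  by (induction xs) (simp_all add: linear_0[OF assms] linear_add[OF assms])

lemma transpose_diff: "transpose (A - B) = transpose A - transpose (B :: 'a::ab_group_add^'n^'m)"
  by (simp add: transpose_def vec_eq_iff)

lemma spec_norm_nonneg: "0 \<le> spec_norm A"
  unfolding spec_norm_def by (intro onorm_pos_le matrix_vector_mul_bounded_linear)

lemma norm_matrix_vector_mult_le: "norm (A *v v) \<le> spec_norm A * norm v"
  unfolding spec_norm_def by (intro onorm matrix_vector_mul_bounded_linear)

lemma norm_transpose_mult_le:
  fixes A :: "real^'n^'m"
  shows "norm (transpose A *v v) \<le> spec_norm A * norm v"
proof -
  let ?u = "transpose A *v v"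
  have "norm ?u * norm ?u = ?u \<bullet> ?u"
    by (simp add: power2_norm_eq_inner[symmetric] power2_eq_square)
  also have "\<dots> = v \<bullet> (A *v ?u)"
    by (simp add: dot_lmul_matrix)
  also have "\<dots> \<le> norm v * norm (A *v ?u)"
    by (rule norm_cauchy_schwarz)
  also have "\<dots> \<le> norm v * (spec_norm A * norm ?u)"
    by (intro mult_left_mono norm_matrix_vector_mult_le norm_ge_zero)
  finally have "norm ?u * norm ?u \<le> (spec_norm A * norm v) * norm ?u"
    by (simp only: ac_simps)
  then show ?thesis
    using spec_norm_nonneg[of A] by (cases "norm ?u = 0") simp_all
qed

lemma weighted_transpose_sum_split:
  fixes J :: "'x \<Rightarrow> real^'d^'p" and g :: "'m \<Rightarrow> 'x \<Rightarrow> real^'p"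
  shows "(\<Sum>m\<in>S. c m *\<^sub>R ((1 / n) *\<^sub>R (\<Sum>x\<leftarrow>xs. transpose (J x) *v g m x)))
       = (\<Sum>m\<in>S. \<Sum>x\<leftarrow>xs. (c m / n) *\<^sub>R (transpose (J x - E) *v g m x))
         + transpose E *v (\<Sum>m\<in>S. c m *\<^sub>R ((1 / n) *\<^sub>R (\<Sum>x\<leftarrow>xs. g m x)))"
proof -
  have scale: "a *\<^sub>R sum_list (map h ys) = sum_list (map (\<lambda>y. a *\<^sub>R h y) ys)"
    for a :: real and h :: "'x \<Rightarrow> real^'k" and ys
    by (rule linear_sum_list[OF linear_scale_self])
  have mult: "transpose E *v sum_list (map h ys) = sum_list (map (\<lambda>y. transpose E *v h y) ys)"
    for h :: "'x \<Rightarrow> real^'p" and ys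
    by (rule linear_sum_list[OF matrix_vector_mul_linear])
  have "transpose E *v (\<Sum>m\<in>S. c m *\<^sub>R ((1 / n) *\<^sub>R (\<Sum>x\<leftarrow>xs. g m x)))
      = (\<Sum>m\<in>S. \<Sum>x\<leftarrow>xs. (c m / n) *\<^sub>R (transpose E *v g m x))"
    by (simp add: linear_sum[OF matrix_vector_mul_linear] scale mult
        matrix_vector_mult_scaleR scaleR_scaleR del: transpose_matrix_vector)
  then show ?thesis
    by (simp add: scale scaleR_scaleR transpose_diff matrix_vector_mult_diff_rdistrib
        scaleR_diff_right sum_list_subtractf sum_subtractf)
qed

theorem theorem1:
  fixes Phi :: "real ^ 'd \<Rightarrow> 'x \<Rightarrow> real ^ 'p"
    and f :: "'m::finite \<Rightarrow> real ^ 'p \<Rightarrow> 'q \<Rightarrow> 'y \<Rightarrow> real"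
    and phi :: "'m \<Rightarrow> 'q"
    and W :: "real ^ 'd"
    and D :: "('x \<times> 'y) measure"
    and B :: "('x \<times> 'y) list"
    and lam :: "'m \<Rightarrow> real"
    and l eps del :: real
  assumes diffPhi: "\<And>x. (\<lambda>w. Phi w x) differentiable (at W)"
    and difff: "\<And>m z q y. (\<lambda>v. f m v q y) differentiable (at z)"
    and probD: "prob_space D"
    and intJ: "integrable D (\<lambda>xy. jacobian (\<lambda>w. Phi w (fst xy)) (at W))"
    and lam_nonneg: "\<And>m. lam m \<ge> 0"
    and lam_sum: "(\<Sum>m\<in>UNIV. lam m) = 1"
    and l_pos: "l > 0" and eps_pos: "eps > 0" and del_pos: "del > 0"
    and hl: "spec_norm (integral\<^sup>L D (\<lambda>xy. jacobian (\<lambda>w. Phi w (fst xy)) (at W))) \<le> l"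
    and heps: "norm (\<Sum>m\<in>UNIV. lam m *\<^sub>R
                 ((1 / real (length B)) *\<^sub>R
                   (\<Sum>xy\<leftarrow>B. grad (\<lambda>v. f m v (phi m) (snd xy)) (Phi W (fst xy))))) \<le> eps"
    and hdel: "norm (\<Sum>m\<in>UNIV. \<Sum>xy\<leftarrow>B. (lam m / real (length B)) *\<^sub>R
                 (transpose (jacobian (\<lambda>w. Phi w (fst xy)) (at W)
                     - integral\<^sup>L D (\<lambda>xy'. jacobian (\<lambda>w. Phi w (fst xy')) (at W)))
                  *v grad (\<lambda>v. f m v (phi m) (snd xy)) (Phi W (fst xy)))) \<le> del"
  shows "norm (\<Sum>m\<in>UNIV. lam m *\<^sub>R
                 ((1 / real (length B)) *\<^sub>R
                   (\<Sum>xy\<leftarrow>B. transpose (jacobian (\<lambda>w. Phi w (fst xy)) (at W))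
                       *v grad (\<lambda>v. f m v (phi m) (snd xy)) (Phi W (fst xy)))))
         \<le> l * eps + del"
proof -
  define E where "E = integral\<^sup>L D (\<lambda>xy. jacobian (\<lambda>w. Phi w (fst xy)) (at W))"
  define R where "R = (\<Sum>m\<in>UNIV. \<Sum>xy\<leftarrow>B. (lam m / real (length B)) *\<^sub>R
                 (transpose (jacobian (\<lambda>w. Phi w (fst xy)) (at W) - E)
                  *v grad (\<lambda>v. f m v (phi m) (snd xy)) (Phi W (fst xy))))"
  define G where "G = (\<Sum>m\<in>UNIV. lam m *\<^sub>R ((1 / real (length B)) *\<^sub>R
                   (\<Sum>xy\<leftarrow>B. grad (\<lambda>v. f m v (phi m) (snd xy)) (Phi W (fst xy)))))"
  have "norm (R + transpose E *v G) \<le> norm R + spec_norm E * norm G"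
    by (rule order_trans[OF norm_triangle_ineq add_left_mono[OF norm_transpose_mult_le]])
  also have "\<dots> \<le> l * eps + del"
    using hdel hl heps spec_norm_nonneg[of E]
    unfolding R_def E_def G_def by (subst add.commute) (intro add_mono mult_mono, simp_all)
  finally show ?thesis
    unfolding R_def E_def G_def weighted_transpose_sum_split[symmetric] .
qed

end
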